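(* Let $L\subseteq\mathbb{C}^n$ be a linear subspace and $m\ge1$. Let $S,T\subseteq[m]\times[n]$ be such that for every $j\in[n]$ the $j$th columns have the same size, $|S_{*,j}|=|T_{*,j}|$. Then \[ \prod_{i=1}^m z_{S_{i,*}}-\prod_{i=1}^m z_{T_{i,*}}\in I_L^{\mathrm{SE}}. \]
   Context: For $S\subseteq[m]\times[n]$, viewed as an $m\times n$ $0/1$ matrix, $S_{i,*}=\{j\in[n]:(i,j)\in S\}$ (the $i$th row) and $S_{*,j}=\{i\in[m]:(i,j)\in S\}$ (the $j$th column). Let $M$ be the matroid of $L$ (bases: $d$-sets $B$ with $L\to\mathbb{C}^B$ an isomorphism, $d=\dim L$). Fix a matrix with row space $L$ and columns $A_i$; for each circuit $C$ of $M$ fix the linear dependence $\sum_{i\in C}\alpha_{C,i}A_i=0$. For $A'\subseteq[n]\setminus C$ set $f_C^{A'}(z)=\sum_{i\in C}\alpha_{C,i}z_{A'\cup\{i\}}$. $I_L^{\mathrm{SE}}\subseteq\mathbb{C}[z_S:S\subseteq[n]]$ is the ideal generated by all $z_Sz_T-z_{S\cup T}z_{S\cap T}$ ($S,T\subseteq[n]$) and all $f_C^{A'}(z)$. *)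

theory Defs
  imports Complex_Main "HOL-Library.Poly_Mapping"
begin

text \<open>Polynomials over the complex numbers in variables z_S indexed by sets S of naturals:
  a polynomial maps monomials (finitely supported exponent vectors) to coefficients.\<close>
type_synonym cpoly = "(nat set \<Rightarrow>\<^sub>0 nat) \<Rightarrow>\<^sub>0 complex"

definition zvar :: "nat set \<Rightarrow> cpoly" where
  "zvar S = Poly_Mapping.single (Poly_Mapping.single S 1) 1"

definition cconst :: "complex \<Rightarrow> cpoly" where
  "cconst c = Poly_Mapping.single 0 c"

definition in_zring :: "nat \<Rightarrow> cpoly \<Rightarrow> bool" where
  "in_zring n p \<longleftrightarrow> (\<forall>mon\<in>Poly_Mapping.keys p. Poly_Mapping.keys mon \<subseteq> Pow {1..n})"

inductive_set ideal_gen :: "nat \<Rightarrow> cpoly set \<Rightarrow> cpoly set" for n G where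
  gen: "g \<in> G \<Longrightarrow> g \<in> ideal_gen n G"
| zero: "0 \<in> ideal_gen n G"
| add: "p \<in> ideal_gen n G \<Longrightarrow> q \<in> ideal_gen n G \<Longrightarrow> p + q \<in> ideal_gen n G"
| mult: "in_zring n h \<Longrightarrow> p \<in> ideal_gen n G \<Longrightarrow> h * p \<in> ideal_gen n G"

text \<open>Matroid of L subset of C^n (vectors are functions nat => complex, coordinates in [n]):
  B is a basis iff the coordinate projection L -> C^B is an isomorphism.\<close>
definition restr :: "nat set \<Rightarrow> (nat \<Rightarrow> complex) \<Rightarrow> (nat \<Rightarrow> complex)" where
  "restr B v = (\<lambda>i. if i \<in> B then v i else 0)"

definition mat_basis :: "nat \<Rightarrow> (nat \<Rightarrow> complex) set \<Rightarrow> nat set \<Rightarrow> bool" where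
  "mat_basis n L B \<longleftrightarrow> B \<subseteq> {1..n} \<and>
     bij_betw (restr B) L {w. \<forall>i. i \<notin> B \<longrightarrow> w i = 0}"

definition mat_indep :: "nat \<Rightarrow> (nat \<Rightarrow> complex) set \<Rightarrow> nat set \<Rightarrow> bool" where
  "mat_indep n L I \<longleftrightarrow> (\<exists>B. mat_basis n L B \<and> I \<subseteq> B)"

definition mat_circuit :: "nat \<Rightarrow> (nat \<Rightarrow> complex) set \<Rightarrow> nat set \<Rightarrow> bool" where
  "mat_circuit n L C \<longleftrightarrow> C \<subseteq> {1..n} \<and> \<not> mat_indep n L C \<and>
     (\<forall>D. D \<subset> C \<longrightarrow> mat_indep n L D)"

definition row_space :: "nat \<Rightarrow> (nat \<Rightarrow> nat \<Rightarrow> complex) \<Rightarrow> (nat \<Rightarrow> complex) set" where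
  "row_space r A = {(\<lambda>i. \<Sum>k<r. c k * A k i) | c. True}"

definition col_dep :: "nat \<Rightarrow> (nat \<Rightarrow> nat \<Rightarrow> complex) \<Rightarrow> nat set \<Rightarrow> (nat \<Rightarrow> complex) \<Rightarrow> bool" where
  "col_dep r A C \<alpha> \<longleftrightarrow> (\<forall>k<r. (\<Sum>i\<in>C. \<alpha> i * A k i) = 0)"

definition fC :: "nat set \<Rightarrow> (nat \<Rightarrow> complex) \<Rightarrow> nat set \<Rightarrow> cpoly" where
  "fC C \<alpha> A' = (\<Sum>i\<in>C. cconst (\<alpha> i) * zvar (insert i A'))"

definition ISE_gens :: "nat \<Rightarrow> (nat \<Rightarrow> complex) set \<Rightarrow> nat \<Rightarrow> (nat \<Rightarrow> nat \<Rightarrow> complex) \<Rightarrow> cpoly set" where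
  "ISE_gens n L r A =
     {zvar S * zvar T - zvar (S \<union> T) * zvar (S \<inter> T) | S T. S \<subseteq> {1..n} \<and> T \<subseteq> {1..n}}
   \<union> {fC C \<alpha> A' | C \<alpha> A'. mat_circuit n L C \<and> col_dep r A C \<alpha> \<and> (\<forall>i\<in>C. \<alpha> i \<noteq> 0)
                        \<and> A' \<subseteq> {1..n} - C}"

definition ISE :: "nat \<Rightarrow> (nat \<Rightarrow> complex) set \<Rightarrow> nat \<Rightarrow> (nat \<Rightarrow> nat \<Rightarrow> complex) \<Rightarrow> cpoly set" where
  "ISE n L r A = ideal_gen n (ISE_gens n L r A)"

definition row_of :: "(nat \<times> nat) set \<Rightarrow> nat \<Rightarrow> nat set" where
  "row_of S i = {j. (i, j) \<in> S}"

definition col_of :: "(nat \<times> nat) set \<Rightarrow> nat \<Rightarrow> nat set" where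
  "col_of S j = {i. (i, j) \<in> S}"

end

theory Submission
  imports Defs
begin

text \<open>Only the exchange relations z_X z_Y = z_(X \<union> Y) z_(X \<inter> Y) are needed. Writing
  c j = |S_(*,j)|, the product of the row variables of S is congruent modulo them to the
  "sorted" product \<Prod>k=1..m z_{j : k \<le> c j}, which depends on the column sizes only. This is
  shown by adding the rows one at a time: multiplying the staircase of level sets of c by
  z_X and exchanging z_X successively with the levels 1, 2, ... raises c by one on X while
  the leftover factor shrinks to X \<inter> level l.\<close>

lemma in_zring_mult:
  assumes "in_zring n p" "in_zring n q"
  shows "in_zring n (p * q)"
  unfolding in_zring_def
proof
  fix mon assume "mon \<in> Poly_Mapping.keys (p * q)"
  then obtain a b where ab: "mon = a + b" "a \<in> Poly_Mapping.keys p" "b \<in> Poly_Mapping.keys q"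
    using keys_mult by blast
  have "Poly_Mapping.keys mon \<subseteq> Poly_Mapping.keys a \<union> Poly_Mapping.keys b"
    unfolding ab(1) by (rule keys_add)
  with assms ab(2,3) show "Poly_Mapping.keys mon \<subseteq> Pow {1..n}"
    unfolding in_zring_def by blast
qed

lemma in_zring_zvar: "X \<subseteq> {1..n} \<Longrightarrow> in_zring n (zvar X)"
  unfolding in_zring_def zvar_def by simp

lemma in_zring_one: "in_zring n 1"
  unfolding in_zring_def by simp

lemma in_zring_uminus_one: "in_zring n (-1)"
  unfolding in_zring_def by simp

lemma in_zring_prod_zvar:
  "(\<And>i. i \<in> I \<Longrightarrow> F i \<subseteq> {1..n}) \<Longrightarrow> in_zring n (\<Prod>i\<in>I. zvar (F i))"
  by (induction I rule: infinite_finite_induct) (auto simp: in_zring_one in_zring_mult in_zring_zvar)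

lemma card_col_of_add_row:
  assumes "S \<subseteq> {1..Suc m} \<times> {1..n}"
  shows "card (col_of S j) =
    card (col_of (S \<inter> ({1..m} \<times> UNIV)) j) + (if j \<in> row_of S (Suc m) then 1 else 0)"
proof -
  let ?C = "col_of (S \<inter> ({1..m} \<times> UNIV)) j"
  have "?C \<subseteq> {1..m}" unfolding col_of_def by auto
  then have "finite ?C" "Suc m \<notin> ?C" by (auto intro: finite_subset)
  moreover have "col_of S j = ?C \<union> (if j \<in> row_of S (Suc m) then {Suc m} else {})"
    using assms unfolding col_of_def row_of_def by (auto simp: le_Suc_eq)
  ultimately show ?thesis by auto
qed

locale exchange_ideal =
  fixes n :: nat and G :: "cpoly set"
  assumes exchange_in_gens: "\<And>X Y. X \<subseteq> {1..n} \<Longrightarrow> Y \<subseteq> {1..n} \<Longrightarrow>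
      zvar X * zvar Y - zvar (X \<union> Y) * zvar (X \<inter> Y) \<in> G"
begin

definition ideal_cong :: "cpoly \<Rightarrow> cpoly \<Rightarrow> bool" where
  "ideal_cong p q \<longleftrightarrow> p - q \<in> ideal_gen n G"

lemma ideal_cong_refl: "ideal_cong p p"
  unfolding ideal_cong_def by (simp add: ideal_gen.zero)

lemma ideal_cong_sym: "ideal_cong p q \<Longrightarrow> ideal_cong q p"
  unfolding ideal_cong_def
  using ideal_gen.mult[where h = "-1" and p = "p - q", OF in_zring_uminus_one] by simp

lemma ideal_cong_trans [trans]: "ideal_cong p q \<Longrightarrow> ideal_cong q s \<Longrightarrow> ideal_cong p s"
  unfolding ideal_cong_def using ideal_gen.add[of "p - q" n G "q - s"] by simp

lemma ideal_cong_mult_left: "in_zring n h \<Longrightarrow> ideal_cong p q \<Longrightarrow> ideal_cong (h * p) (h * q)"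
  unfolding ideal_cong_def using ideal_gen.mult[of n h "p - q" G]
  by (simp add: right_diff_distrib)

lemma ideal_cong_mult_right: "in_zring n h \<Longrightarrow> ideal_cong p q \<Longrightarrow> ideal_cong (p * h) (q * h)"
  using ideal_cong_mult_left by (simp add: mult.commute)

lemma ideal_cong_exchange:
  "X \<subseteq> {1..n} \<Longrightarrow> Y \<subseteq> {1..n} \<Longrightarrow>
   ideal_cong (zvar X * zvar Y) (zvar (X \<union> Y) * zvar (X \<inter> Y))"
  unfolding ideal_cong_def using exchange_in_gens ideal_gen.gen by blast

definition level_set :: "(nat \<Rightarrow> nat) \<Rightarrow> nat \<Rightarrow> nat set" where
  "level_set f k = {j \<in> {1..n}. k \<le> f j}"

lemma level_set_subset: "level_set f k \<subseteq> {1..n}"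
  unfolding level_set_def by auto

lemma zvar_mult_level_prod:
  fixes f :: "nat \<Rightarrow> nat"
  assumes X: "X \<subseteq> {1..n}"
  defines "g \<equiv> (\<lambda>j. f j + (if j \<in> X then 1 else 0))"
  shows "ideal_cong (zvar X * (\<Prod>k\<in>{1..l}. zvar (level_set f k)))
                    ((\<Prod>k\<in>{1..l}. zvar (level_set g k)) * zvar (X \<inter> level_set f l))"
proof (induction l)
  case 0
  have "X \<inter> level_set f 0 = X" using X unfolding level_set_def by auto
  then show ?case by (simp add: ideal_cong_refl)
next
  case (Suc l)
  let ?P = "\<Prod>k\<in>{1..l}. zvar (level_set f k)"
  let ?Q = "\<Prod>k\<in>{1..l}. zvar (level_set g k)"
  let ?R = "X \<inter> level_set f l"
  have "ideal_cong (zvar X * ?P * zvar (level_set f (Suc l)))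
                   (?Q * zvar ?R * zvar (level_set f (Suc l)))"
    using ideal_cong_mult_right[OF in_zring_zvar[OF level_set_subset] Suc.IH] by simp
  moreover have "ideal_cong (?Q * (zvar ?R * zvar (level_set f (Suc l))))
      (?Q * (zvar (?R \<union> level_set f (Suc l)) * zvar (?R \<inter> level_set f (Suc l))))"
    by (intro ideal_cong_mult_left in_zring_prod_zvar level_set_subset ideal_cong_exchange)
       (use X level_set_subset in auto)
  moreover have "?R \<union> level_set f (Suc l) = level_set g (Suc l)"
    unfolding level_set_def g_def by auto
  moreover have "?R \<inter> level_set f (Suc l) = X \<inter> level_set f (Suc l)"
    unfolding level_set_def by auto
  ultimately show ?case
    using ideal_cong_trans by (simp add: mult.assoc)
qed

lemma row_prod_cong_level_prod:
  "S \<subseteq> {1..m} \<times> {1..n} \<Longrightarrow>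
   ideal_cong (\<Prod>i\<in>{1..m}. zvar (row_of S i))
              (\<Prod>k\<in>{1..m}. zvar (level_set (\<lambda>j. card (col_of S j)) k))"
proof (induction m arbitrary: S)
  case 0
  then show ?case by (simp add: ideal_cong_refl)
next
  case (Suc m)
  define S' where "S' = S \<inter> ({1..m} \<times> UNIV)"
  define X where "X = row_of S (Suc m)"
  define f where "f = (\<lambda>j. card (col_of S' j))"
  define g where "g = (\<lambda>j. f j + (if j \<in> X then 1 else 0))"
  have S': "S' \<subseteq> {1..m} \<times> {1..n}" using Suc.prems unfolding S'_def by auto
  have X: "X \<subseteq> {1..n}" using Suc.prems unfolding X_def row_of_def by auto
  have f_le: "f j \<le> m" for j
    using S' card_mono[of "{1..m}" "col_of S' j"] unfolding f_def col_of_def by auto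
  have "card (col_of S j) = g j" for j
    using card_col_of_add_row[OF Suc.prems] unfolding S'_def X_def f_def g_def by simp
  then have levels_S: "level_set (\<lambda>j. card (col_of S j)) = level_set g"
    by simp
  have rows: "(\<Prod>i\<in>{1..m}. zvar (row_of S i)) = (\<Prod>i\<in>{1..m}. zvar (row_of S' i))"
    by (rule prod.cong) (auto simp: row_of_def S'_def)
  have "j \<in> X \<and> m \<le> f j \<longleftrightarrow> Suc m \<le> g j" for j
    using f_le[of j] unfolding g_def by auto
  then have top_level: "X \<inter> level_set f m = level_set g (Suc m)"
    using X unfolding level_set_def by auto
  have "ideal_cong (zvar X * (\<Prod>i\<in>{1..m}. zvar (row_of S' i)))
                   (zvar X * (\<Prod>k\<in>{1..m}. zvar (level_set f k)))"
    using ideal_cong_mult_left[OF in_zring_zvar[OF X] Suc.IH[OF S']] f_def by simp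
  also have "ideal_cong \<dots> ((\<Prod>k\<in>{1..m}. zvar (level_set g k)) * zvar (level_set g (Suc m)))"
    using zvar_mult_level_prod[OF X, of f m] g_def top_level by simp
  finally show ?case
    using rows levels_S by (simp add: X_def mult.commute)
qed

end

theorem lemma5p16:
  fixes n m r :: nat and L :: "(nat \<Rightarrow> complex) set"
    and A :: "nat \<Rightarrow> nat \<Rightarrow> complex" and S T :: "(nat \<times> nat) set"
  assumes "m \<ge> 1"
    and "\<forall>k<r. \<forall>i. i \<notin> {1..n} \<longrightarrow> A k i = 0"
    and "row_space r A = L"
    and "S \<subseteq> {1..m} \<times> {1..n}" and "T \<subseteq> {1..m} \<times> {1..n}"
    and "\<forall>j\<in>{1..n}. card (col_of S j) = card (col_of T j)"
  shows "(\<Prod>i\<in>{1..m}. zvar (row_of S i)) - (\<Prod>i\<in>{1..m}. zvar (row_of T i)) \<in> ISE n L r A"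
proof -
  interpret exchange_ideal n "ISE_gens n L r A"
    by unfold_locales (auto simp: ISE_gens_def)
  have same_levels: "level_set (\<lambda>j. card (col_of S j)) = level_set (\<lambda>j. card (col_of T j))"
    using assms(6) unfolding level_set_def by (intro ext Collect_cong) auto
  have "ideal_cong (\<Prod>i\<in>{1..m}. zvar (row_of S i)) (\<Prod>i\<in>{1..m}. zvar (row_of T i))"
    using row_prod_cong_level_prod[OF assms(4)]
      ideal_cong_sym[OF row_prod_cong_level_prod[OF assms(5)]]
    unfolding same_levels by (rule ideal_cong_trans)
  then show ?thesis
    unfolding ideal_cong_def ISE_def .
qed

end
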